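(* Let $\gamma_a,\gamma_s>0$, $\lambda\ge0$, $q>0$, $\sigma_B>0$, $\varepsilon_a>0$, and let $\beta_a,\beta_s:\mathbb R\to\mathbb R$ be globally Lipschitz continuous with $\beta_a\ge0$, $\beta_s>0$. Consider the maximal solution $(T_a,T_s)$ of \[ \begin{cases} \gamma_a T_a'=-\lambda(T_a-T_s)+\varepsilon_a\sigma_B|T_s|^3T_s-2\varepsilon_a\sigma_B|T_a|^3T_a+q\beta_a(T_a),\\ \gamma_s T_s'=-\lambda(T_s-T_a)-\sigma_B|T_s|^3T_s+\varepsilon_a\sigma_B|T_a|^3T_a+q\beta_s(T_s),\\ T_a(0)=T_a^{(0)},\quad T_s(0)=T_s^{(0)} \end{cases} \] with $T_a^{(0)}\ge0$ and $T_s^{(0)}\ge0$. Then for every positive time $t$ at which the solution exists, $T_a(t)>0$ and $T_s(t)>0$. *)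

theory Defs
  imports "HOL-Analysis.Analysis"
begin

end

theory Submission
  imports Defs
begin

text \<open>A continuous function starting nonnegative that has positive derivative wherever it is
  nonpositive is strictly positive afterwards: at a point where it attains a nonpositive minimum
  it would have to decrease from the left. For the coupled system the surface
  temperature is pushed up wherever \<open>T\<^sub>s \<le> 0 \<le> T\<^sub>a\<close> and the atmospheric one wherever
  \<open>T\<^sub>a \<le> 0 < T\<^sub>s\<close>. Hence on any stretch where \<open>T\<^sub>a \<ge> 0\<close> first \<open>T\<^sub>s\<close> and then \<open>T\<^sub>a\<close> become
  positive, and at the first time \<open>\<tau>\<close> where one of them is not positive both are positive just
  before, just after and at \<open>\<tau>\<close> itself, a contradiction.\<close>

lemma DERIV_pos_when_nonpos_imp_pos:
  fixes f :: "real \<Rightarrow> real"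
  assumes cont: "continuous_on {a..b} f" and "a < b" and "f a \<ge> 0"
    and pushed: "\<And>u. u \<in> {a<..b} \<Longrightarrow> f u \<le> 0 \<Longrightarrow>
      \<exists>D>0. (f has_real_derivative D) (at u within {a..b})"
  shows "f b > 0"
proof (rule ccontr)
  assume "\<not> f b > 0"
  obtain u where u: "u \<in> {a<..b}" and min: "\<And>v. v \<in> {a..b} \<Longrightarrow> f u \<le> f v"
  proof -
    obtain u0 where u0: "u0 \<in> {a..b}" "\<And>v. v \<in> {a..b} \<Longrightarrow> f u0 \<le> f v"
      using continuous_attains_inf[OF compact_Icc _ cont] \<open>a < b\<close> by fastforce
    show ?thesis
    proof (cases "u0 = a")
      case True
      \<comment> \<open>then \<open>f b \<le> 0 \<le> f a\<close> makes \<open>b\<close> a minimiser as well\<close>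
      then show ?thesis
        using that[of b] u0 \<open>a < b\<close> \<open>f a \<ge> 0\<close> \<open>\<not> f b > 0\<close> by fastforce
    next
      case False
      then show ?thesis
        using u0 by (intro that[of u0]) auto
    qed
  qed
  have "f u \<le> 0"
    using min[of b] u \<open>\<not> f b > 0\<close> by auto
  then obtain D where "D > 0" "(f has_real_derivative D) (at u within {a..b})"
    using pushed u by blast
  then obtain d where "d > 0"
    and dec: "\<And>h. h > 0 \<Longrightarrow> u - h \<in> {a..b} \<Longrightarrow> h < d \<Longrightarrow> f (u - h) < f u"
    using has_real_derivative_pos_inc_left by blast
  define h where "h = min (d / 2) (u - a)"
  have "h > 0" "h < d" "u - h \<in> {a..b}"
    using \<open>d > 0\<close> u by (auto simp: h_def)
  then show False
    using dec min by fastforce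
qed

lemma DERIV_pos_when_nonpos_imp_pos_right:
  fixes f :: "real \<Rightarrow> real"
  assumes cont: "continuous_on {a..b} f" and "a < b" and "f a \<ge> 0"
    and pushed: "f a \<le> 0 \<Longrightarrow> \<exists>D>0. (f has_real_derivative D) (at a within {a..b})"
  obtains c where "c \<in> {a<..b}" and "\<And>v. v \<in> {a<..c} \<Longrightarrow> f v > 0"
proof -
  obtain d where "d > 0" and pos: "\<And>v. v \<in> {a<..b} \<Longrightarrow> v < a + d \<Longrightarrow> f v > 0"
  proof (cases "f a > 0")
    case True
    have "continuous (at a within {a..b}) f"
      using cont \<open>a < b\<close> by (simp add: continuous_on_eq_continuous_within)
    then have "\<forall>\<^sub>F v in at a within {a..b}. f v > 0"
      using True by (simp add: continuous_within order_tendstoD(1))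
    then obtain d where "d > 0" "\<And>v. v \<in> {a..b} \<Longrightarrow> v \<noteq> a \<Longrightarrow> dist v a < d \<Longrightarrow> f v > 0"
      unfolding eventually_at by blast
    then show ?thesis
      using that[of d] by (auto simp: dist_real_def)
  next
    case False
    then obtain D where "D > 0" "(f has_real_derivative D) (at a within {a..b})"
      using pushed by auto
    then obtain d where "d > 0"
      and inc: "\<And>h. h > 0 \<Longrightarrow> a + h \<in> {a..b} \<Longrightarrow> h < d \<Longrightarrow> f a < f (a + h)"
      using has_real_derivative_pos_inc_right by blast
    show ?thesis
    proof (rule that[of d])
      fix v assume "v \<in> {a<..b}" "v < a + d"
      then show "f v > 0"
        using inc[of "v - a"] \<open>f a \<ge> 0\<close> by auto
    qed (fact \<open>d > 0\<close>)
  qed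
  show ?thesis
    using that[of "min b (a + d / 2)"] pos \<open>a < b\<close> \<open>d > 0\<close> by auto
qed

text \<open>At the corner \<open>x = y = 0\<close> only \<open>y\<close> is pushed inward (the heating \<open>q \<beta>\<^sub>a\<close> may vanish),
  hence the strict \<open>y u > 0\<close> in \<open>inward_x\<close>.\<close>

locale inward_on_quadrant_boundary =
  fixes x y :: "real \<Rightarrow> real" and t :: real
  assumes continuous_x: "continuous_on {0..t} x"
    and continuous_y: "continuous_on {0..t} y"
    and inward_y: "\<And>u. u \<in> {0..t} \<Longrightarrow> y u \<le> 0 \<Longrightarrow> x u \<ge> 0 \<Longrightarrow>
      \<exists>D>0. (y has_real_derivative D) (at u within {0..t})"
    and inward_x: "\<And>u. u \<in> {0..t} \<Longrightarrow> x u \<le> 0 \<Longrightarrow> y u > 0 \<Longrightarrow>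
      \<exists>D>0. (x has_real_derivative D) (at u within {0..t})"
begin

lemma x_pos_if_y_pos:
  assumes "0 \<le> a" "a < b" "b \<le> t" "x a \<ge> 0" and y_pos: "\<And>u. u \<in> {a<..b} \<Longrightarrow> y u > 0"
  shows "x b > 0"
proof (rule DERIV_pos_when_nonpos_imp_pos[of a b x])
  show "continuous_on {a..b} x"
    using continuous_on_subset[OF continuous_x] assms by auto
  fix u assume "u \<in> {a<..b}" "x u \<le> 0"
  then show "\<exists>D>0. (x has_real_derivative D) (at u within {a..b})"
    using inward_x[of u] y_pos[of u] assms has_field_derivative_subset[of x _ u "{0..t}" "{a..b}"]
    by auto
qed (use assms in auto)

lemma y_pos_if_x_nonneg:
  assumes "0 \<le> a" "a < b" "b \<le> t" "y a \<ge> 0" and x_nonneg: "\<And>u. u \<in> {a<..b} \<Longrightarrow> x u \<ge> 0"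
  shows "y b > 0"
proof (rule DERIV_pos_when_nonpos_imp_pos[of a b y])
  show "continuous_on {a..b} y"
    using continuous_on_subset[OF continuous_y] assms by auto
  fix u assume "u \<in> {a<..b}" "y u \<le> 0"
  then show "\<exists>D>0. (y has_real_derivative D) (at u within {a..b})"
    using inward_y[of u] x_nonneg[of u] assms has_field_derivative_subset[of y _ u "{0..t}" "{a..b}"]
    by auto
qed (use assms in auto)

lemma pos_if_x_nonneg:
  assumes "0 \<le> a" "a < b" "b \<le> t" "y a \<ge> 0" and x_nonneg: "\<And>u. u \<in> {a..b} \<Longrightarrow> x u \<ge> 0"
  shows "x b > 0 \<and> y b > 0"
proof -
  have "y v > 0" if "v \<in> {a<..b}" for v
    using y_pos_if_x_nonneg[of a v] that assms by auto
  then show ?thesis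
    using x_pos_if_y_pos[of a b] assms by auto
qed

lemma pos_right_of_nonneg:
  assumes "0 \<le> a" "a < t" "x a \<ge> 0" "y a \<ge> 0"
  obtains c where "c \<in> {a<..t}" and "\<And>v. v \<in> {a<..c} \<Longrightarrow> x v > 0 \<and> y v > 0"
proof -
  have "continuous_on {a..t} y"
    using continuous_on_subset[OF continuous_y] assms by auto
  moreover have "\<exists>D>0. (y has_real_derivative D) (at a within {a..t})" if "y a \<le> 0"
    using inward_y[of a] that assms has_field_derivative_subset[of y _ a "{0..t}" "{a..t}"] by auto
  ultimately obtain c where c: "c \<in> {a<..t}" and y_pos: "\<And>v. v \<in> {a<..c} \<Longrightarrow> y v > 0"
    using DERIV_pos_when_nonpos_imp_pos_right[of a t y] assms by blast
  have "x v > 0" if "v \<in> {a<..c}" for v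
    using x_pos_if_y_pos[of a v] y_pos that c assms by auto
  then show ?thesis
    using that c y_pos by blast
qed

theorem pos_at_end:
  assumes "0 < t" "x 0 \<ge> 0" "y 0 \<ge> 0"
  shows "x t > 0 \<and> y t > 0"
proof (rule ccontr)
  assume neg: "\<not> (x t > 0 \<and> y t > 0)"
  define B where "B = {v \<in> {0<..t}. \<not> (x v > 0 \<and> y v > 0)}"
  define \<tau> where "\<tau> = Inf B"
  have "t \<in> B" and bdd: "bdd_below B"
    using neg \<open>0 < t\<close> by (auto simp: B_def intro: bdd_belowI[of _ 0])
  then have "\<tau> \<le> t"
    unfolding \<tau>_def by (rule cInf_lower)
  have "0 \<le> \<tau>"
    unfolding \<tau>_def using \<open>t \<in> B\<close> by (intro cInf_greatest) (auto simp: B_def)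
  have before: "x v > 0 \<and> y v > 0" if "0 < v" "v < \<tau>" for v
    using cInf_lower[OF _ bdd, of v] that \<open>\<tau> \<le> t\<close> by (force simp: B_def \<tau>_def)
  have nonneg: "x \<tau> \<ge> 0 \<and> y \<tau> \<ge> 0"
  proof (cases "\<tau> = 0")
    case False
    then have "\<tau> \<in> closure {0<..<\<tau>}" "closure {0<..<\<tau>} \<subseteq> {0..t}"
      using \<open>0 \<le> \<tau>\<close> \<open>\<tau> \<le> t\<close> by auto
    then show ?thesis
      using continuous_ge_on_closure[of "{0<..<\<tau>}" _ \<tau> 0] before
        continuous_on_subset[OF continuous_x] continuous_on_subset[OF continuous_y]
      by (meson greaterThanLessThan_iff less_imp_le)
  qed (use assms in simp)
  have "\<tau> \<notin> B"
  proof
    assume "\<tau> \<in> B"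
    then have "0 < \<tau>"
      by (simp add: B_def)
    have "x u \<ge> 0" if "u \<in> {\<tau> / 2..\<tau>}" for u
      using before[of u] nonneg that \<open>0 < \<tau>\<close> by (cases "u = \<tau>") auto
    then have "x \<tau> > 0 \<and> y \<tau> > 0"
      using pos_if_x_nonneg[of "\<tau> / 2" \<tau>] before[of "\<tau> / 2"] \<open>0 < \<tau>\<close> \<open>\<tau> \<le> t\<close> by auto
    with \<open>\<tau> \<in> B\<close> show False
      by (simp add: B_def)
  qed
  with \<open>t \<in> B\<close> \<open>\<tau> \<le> t\<close> have "\<tau> < t"
    by (cases "\<tau> = t") auto
  then obtain c where c: "c \<in> {\<tau><..t}" and after: "\<And>v. v \<in> {\<tau><..c} \<Longrightarrow> x v > 0 \<and> y v > 0"
    using pos_right_of_nonneg \<open>0 \<le> \<tau>\<close> nonneg by blast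
  obtain v where "v \<in> B" "v < c"
    using cInf_less_iff[of B c] \<open>t \<in> B\<close> bdd c by (auto simp: \<tau>_def)
  moreover have "\<tau> < v"
    using cInf_lower[OF \<open>v \<in> B\<close> bdd] \<open>\<tau> \<notin> B\<close> \<open>v \<in> B\<close> unfolding \<tau>_def
    by (metis order_le_less)
  ultimately show False
    using after[of v] by (simp add: B_def)
qed

end

lemma surface_rhs_pos:
  fixes lam \<sigma>B \<epsilon>a q b Ta Ts :: real
  assumes "lam \<ge> 0" "\<sigma>B > 0" "\<epsilon>a > 0" "q > 0" "b > 0" "Ts \<le> 0" "Ta \<ge> 0"
  shows "- lam * (Ts - Ta) - \<sigma>B * \<bar>Ts\<bar>^3 * Ts + \<epsilon>a * \<sigma>B * \<bar>Ta\<bar>^3 * Ta + q * b > 0"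
proof -
  have "- lam * (Ts - Ta) \<ge> 0" "\<sigma>B * \<bar>Ts\<bar>^3 * Ts \<le> 0" "\<epsilon>a * \<sigma>B * \<bar>Ta\<bar>^3 * Ta \<ge> 0"
      "q * b > 0"
    using assms by (simp_all add: mult_nonpos_nonpos mult_nonneg_nonpos)
  then show ?thesis
    by linarith
qed

lemma atmosphere_rhs_pos:
  fixes lam \<sigma>B \<epsilon>a q b Ta Ts :: real
  assumes "lam \<ge> 0" "\<sigma>B > 0" "\<epsilon>a > 0" "q > 0" "b \<ge> 0" "Ta \<le> 0" "Ts > 0"
  shows "- lam * (Ta - Ts) + \<epsilon>a * \<sigma>B * \<bar>Ts\<bar>^3 * Ts - 2 * \<epsilon>a * \<sigma>B * \<bar>Ta\<bar>^3 * Ta + q * b > 0"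
proof -
  have "- lam * (Ta - Ts) \<ge> 0" "\<epsilon>a * \<sigma>B * \<bar>Ts\<bar>^3 * Ts > 0" "2 * \<epsilon>a * \<sigma>B * \<bar>Ta\<bar>^3 * Ta \<le> 0"
      "q * b \<ge> 0"
    using assms by (simp_all add: mult_nonpos_nonpos mult_nonneg_nonpos)
  then show ?thesis
    by linarith
qed

theorem lemma4p1:
  fixes \<gamma>a \<gamma>s lam q \<sigma>B \<epsilon>a Ta0 Ts0 t :: real
    and \<beta>a \<beta>s Ta Ts :: "real \<Rightarrow> real"
  assumes "\<gamma>a > 0" "\<gamma>s > 0" "lam \<ge> 0" "q > 0" "\<sigma>B > 0" "\<epsilon>a > 0"
    and "\<exists>L. L-lipschitz_on UNIV \<beta>a" "\<exists>L. L-lipschitz_on UNIV \<beta>s"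
    and "\<And>x. \<beta>a x \<ge> 0" "\<And>x. \<beta>s x > 0"
    and "Ta0 \<ge> 0" "Ts0 \<ge> 0"
    and "t > 0"
    and "Ta 0 = Ta0" "Ts 0 = Ts0"
    and "\<And>s. s \<in> {0..t} \<Longrightarrow>
      (\<exists>D. (Ta has_real_derivative D) (at s within {0..t}) \<and> \<gamma>a * D =
         (- lam * (Ta s - Ts s) + \<epsilon>a * \<sigma>B * \<bar>Ts s\<bar>^3 * Ts s
          - 2 * \<epsilon>a * \<sigma>B * \<bar>Ta s\<bar>^3 * Ta s + q * \<beta>a (Ta s)))"
    and "\<And>s. s \<in> {0..t} \<Longrightarrow>
      (\<exists>D. (Ts has_real_derivative D) (at s within {0..t}) \<and> \<gamma>s * D =
         (- lam * (Ts s - Ta s) - \<sigma>B * \<bar>Ts s\<bar>^3 * Ts s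
          + \<epsilon>a * \<sigma>B * \<bar>Ta s\<bar>^3 * Ta s + q * \<beta>s (Ts s)))"
  shows "Ta t > 0 \<and> Ts t > 0"
proof -
  \<comment> \<open>The Lipschitz hypotheses only secure existence of the maximal solution.\<close>
  have "continuous_on {0..t} Ta" "continuous_on {0..t} Ts"
    using assms(16,17) DERIV_continuous by (fastforce simp: continuous_on_eq_continuous_within)+
  then interpret inward_on_quadrant_boundary Ta Ts t
  proof unfold_locales
    fix u assume u: "u \<in> {0..t}" "Ts u \<le> 0" "Ta u \<ge> 0"
    then obtain D where D: "(Ts has_real_derivative D) (at u within {0..t})" and rhs: "\<gamma>s * D =
        - lam * (Ts u - Ta u) - \<sigma>B * \<bar>Ts u\<bar>^3 * Ts u + \<epsilon>a * \<sigma>B * \<bar>Ta u\<bar>^3 * Ta u + q * \<beta>s (Ts u)"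
      using assms(17) by blast
    have "\<gamma>s * D > 0"
      using surface_rhs_pos[of lam \<sigma>B \<epsilon>a q "\<beta>s (Ts u)"] u assms(3-6,10) rhs by simp
    then show "\<exists>D>0. (Ts has_real_derivative D) (at u within {0..t})"
      using D \<open>\<gamma>s > 0\<close> zero_less_mult_pos by blast
  next
    fix u assume u: "u \<in> {0..t}" "Ta u \<le> 0" "Ts u > 0"
    then obtain D where D: "(Ta has_real_derivative D) (at u within {0..t})" and rhs: "\<gamma>a * D =
        - lam * (Ta u - Ts u) + \<epsilon>a * \<sigma>B * \<bar>Ts u\<bar>^3 * Ts u - 2 * \<epsilon>a * \<sigma>B * \<bar>Ta u\<bar>^3 * Ta u + q * \<beta>a (Ta u)"
      using assms(16) by blast
    have "\<gamma>a * D > 0"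
      using atmosphere_rhs_pos[of lam \<sigma>B \<epsilon>a q "\<beta>a (Ta u)"] u assms(3-6,9) rhs by simp
    then show "\<exists>D>0. (Ta has_real_derivative D) (at u within {0..t})"
      using D \<open>\<gamma>a > 0\<close> zero_less_mult_pos by blast
  qed
  show ?thesis
    using pos_at_end assms(11-15) by simp
qed

end
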